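(* Let $\mathcal D$ be a clone $\tau$-algebra. (1) If $\mathcal D$ is minimal, then $(\mathcal D^\downarrow)^\uparrow\cong\mathcal D$. (2) For every congruence $\phi$ of the clone $\tau$-algebra $\mathcal T_\tau$ of $\tau$-terms, $((\mathcal T_\tau/\phi)^\downarrow)^\uparrow\cong\mathcal T_\tau/\phi$. (3) For every t-algebra $\mathbf A$ of type $\tau$, $((\mathbf A^\uparrow)^\downarrow)^\uparrow\cong\mathbf A^\uparrow$.
   Context: $\mathbb N=\{1,2,\dots\}$. A thread on $A$ is $s\in A^{\mathbb N}$; $r[a_1,\dots,a_n]$ is the thread with entries $a_i$ for $i\le n$ and $r_i$ for $i>n$; $r\equiv_{\mathbb N}s$ iff they differ in finitely many places, $[s]_{\mathbb N}$ the class. A trace on $A$ is a nonempty union of $\equiv_{\mathbb N}$-classes. A t-algebra of type $\tau$ and trace $\mathsf a$ is $(A,\mathsf a,\sigma^{\mathbf A})_{\sigma\in\tau}$ with $\sigma^{\mathbf A}:\mathsf a\to A$ arbitrary. Clone $\tau$-algebras: algebras $(C,q_n,\mathsf e_i,\sigma)_{n\ge0,i\ge1,\sigma\in\tau}$ (constants $\mathsf e_i,\sigma$; $q_n$ of arity $n+1$) satisfying (C1) $q_n(\mathsf e_i,\bar x)=x_i$ ($i\le n$); (C2) $q_n(\mathsf e_j,\bar x)=\mathsf e_j$ ($j>n$); (C3) $q_n(x,\mathsf e_1,\dots,\mathsf e_n)=x$; (C4) $q_n(x,\bar y)=q_k(x,\bar y,\mathsf e_{n+1},\dots,\mathsf e_k)$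 ($k>n$); (C5) $q_n(q_n(x,\bar y),\bar z)=q_n(x,q_n(y_1,\bar z),\dots,q_n(y_n,\bar z))$. A clone $\tau$-algebra is minimal if it is generated by its constants $\mathsf e_i$ ($i\ge1$) and $\sigma$ ($\sigma\in\tau$). $\mathcal T_\tau$ denotes the initial clone $\tau$-algebra, whose elements are the $\tau$-terms (least set containing $\mathsf e_1,\mathsf e_2,\dots$ and $\sigma(t_1,\dots,t_n,\mathsf e_{n+1},\mathsf e_{n+2},\dots)$ for $\sigma\in\tau$, $n\ge0$), with $q_n(t,t_1,\dots,t_n)$ the simultaneous substitution of $t_i$ for $\mathsf e_i$ ($i\le n$) in $t$. For a clone $\tau$-algebra $\mathcal C$: $\epsilon^{\mathcal C}=(\mathsf e_1^{\mathcal C},\mathsf e_2^{\mathcal C},\dots)$, $\pmb\epsilon=[\epsilon^{\mathcal C}]_{\mathbb N}$, and for $c\in C$, $\varphi_c:\pmb\epsilon\to C$, $\varphi_c(\epsilon^{\mathcal C}[s_1,\dots,s_n])=q_n^{\mathcal C}(c,s_1,\dots,s_n)$. The t-algebra under $\mathcal C$ is $\mathcal C^\downarrow=(C,\pmb\epsilon,\varphi_{\sigma^{\mathcal C}})_{\sigma\in\tau}$. For a t-algebra $\mathbf A$ of trace $\mathsf a$, the full functional clone $\tau$-algebra has universe all maps $\mathsf a\to A$, $\mathsf e_i(s)=s_i$, $q_n(\varphi,\psi_1,\dots,\psi_n)(s)=\varphi(s[\psi_1(s),\dots,\psi_n(s)])$, $\sigma\mapsto\sigma^{\mathbf A}$;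 the term clone algebra $\mathbf A^\uparrow$ is its minimal subalgebra (the one generated by the constants). *)

theory Defs
  imports Main "HOL-Library.FuncSet"
begin

(* Conventions: indices are 0-based.  The paper's e_i (i >= 1) is  ce D (i-1),
   the paper's thread entry s_i (i >= 1) is  s (i-1).
   q_n(x, y_1,...,y_n) is  cq D x [y_1,...,y_n]  (n = length of the list). *)

record ('c, 't) clone_alg =
  ccarrier :: "'c set"
  cq :: "'c \<Rightarrow> 'c list \<Rightarrow> 'c"
  ce :: "nat \<Rightarrow> 'c"
  cop :: "'t \<Rightarrow> 'c"

definition clone_algebra :: "('c, 't, 'z) clone_alg_scheme \<Rightarrow> bool" where
  "clone_algebra D \<longleftrightarrow>
     (\<forall>i. ce D i \<in> ccarrier D) \<and>
     (\<forall>\<sigma>. cop D \<sigma> \<in> ccarrier D) \<and>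
     (\<forall>x ys. x \<in> ccarrier D \<longrightarrow> set ys \<subseteq> ccarrier D \<longrightarrow> cq D x ys \<in> ccarrier D) \<and>
     \<comment> \<open>(C1)\<close>
     (\<forall>ys i. set ys \<subseteq> ccarrier D \<longrightarrow> i < length ys \<longrightarrow> cq D (ce D i) ys = ys ! i) \<and>
     \<comment> \<open>(C2)\<close>
     (\<forall>ys j. set ys \<subseteq> ccarrier D \<longrightarrow> length ys \<le> j \<longrightarrow> cq D (ce D j) ys = ce D j) \<and>
     \<comment> \<open>(C3)\<close>
     (\<forall>x n. x \<in> ccarrier D \<longrightarrow> cq D x (map (ce D) [0..<n]) = x) \<and>
     \<comment> \<open>(C4)\<close>
     (\<forall>x ys k. x \<in> ccarrier D \<longrightarrow> set ys \<subseteq> ccarrier D \<longrightarrow> length ys < k \<longrightarrow>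
        cq D x ys = cq D x (ys @ map (ce D) [length ys..<k])) \<and>
     \<comment> \<open>(C5)\<close>
     (\<forall>x ys zs. x \<in> ccarrier D \<longrightarrow> set ys \<subseteq> ccarrier D \<longrightarrow> set zs \<subseteq> ccarrier D \<longrightarrow>
        length ys = length zs \<longrightarrow>
        cq D (cq D x ys) zs = cq D x (map (\<lambda>y. cq D y zs) ys))"

inductive_set clone_gen :: "('c, 't, 'z) clone_alg_scheme \<Rightarrow> 'c set" for D where
  gen_e: "ce D i \<in> clone_gen D"
| gen_op: "cop D \<sigma> \<in> clone_gen D"
| gen_q: "x \<in> clone_gen D \<Longrightarrow> (\<And>y. y \<in> set ys \<Longrightarrow> y \<in> clone_gen D) \<Longrightarrow> cq D x ys \<in> clone_gen D"

definition minimal_clone :: "('c, 't, 'z) clone_alg_scheme \<Rightarrow> bool" where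
  "minimal_clone D \<longleftrightarrow> ccarrier D = clone_gen D"

definition clone_iso :: "('c, 't, 'z) clone_alg_scheme \<Rightarrow> ('d, 't, 'w) clone_alg_scheme \<Rightarrow> ('c \<Rightarrow> 'd) \<Rightarrow> bool" where
  "clone_iso D E f \<longleftrightarrow>
     bij_betw f (ccarrier D) (ccarrier E) \<and>
     (\<forall>x ys. x \<in> ccarrier D \<longrightarrow> set ys \<subseteq> ccarrier D \<longrightarrow> f (cq D x ys) = cq E (f x) (map f ys)) \<and>
     (\<forall>i. f (ce D i) = ce E i) \<and>
     (\<forall>\<sigma>. f (cop D \<sigma>) = cop E \<sigma>)"

definition clone_isomorphic :: "('c, 't, 'z) clone_alg_scheme \<Rightarrow> ('d, 't, 'w) clone_alg_scheme \<Rightarrow> bool" where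
  "clone_isomorphic D E \<longleftrightarrow> (\<exists>f. clone_iso D E f)"

definition clone_congruence :: "('c, 't, 'z) clone_alg_scheme \<Rightarrow> ('c \<times> 'c) set \<Rightarrow> bool" where
  "clone_congruence D \<phi> \<longleftrightarrow>
     equiv (ccarrier D) \<phi> \<and>
     (\<forall>x x' ys ys'. (x, x') \<in> \<phi> \<longrightarrow> list_all2 (\<lambda>y y'. (y, y') \<in> \<phi>) ys ys' \<longrightarrow>
        (cq D x ys, cq D x' ys') \<in> \<phi>)"

definition clone_quot :: "('c, 't, 'z) clone_alg_scheme \<Rightarrow> ('c \<times> 'c) set \<Rightarrow> ('c set, 't) clone_alg" where
  "clone_quot D \<phi> =
     \<lparr> ccarrier = ccarrier D // \<phi>,
       cq = (\<lambda>X Ys. \<phi> `` {cq D (SOME x. x \<in> X) (map (\<lambda>Y. SOME y. y \<in> Y) Ys)}),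
       ce = (\<lambda>i. \<phi> `` {ce D i}),
       cop = (\<lambda>\<sigma>. \<phi> `` {cop D \<sigma>}) \<rparr>"

text \<open>Op sigma [t_1,...,t_n] stands for sigma(t_1,...,t_n,e_{n+1},e_{n+2},...).
  Terms are kept in normal form: no trailing argument t_n equal to e_n.\<close>
datatype 't trm = Var nat | Op 't "'t trm list"

definition trim_args :: "'t trm list \<Rightarrow> 't trm list" where
  "trim_args xs = take (LEAST k. \<forall>j. k \<le> j \<and> j < length xs \<longrightarrow> xs ! j = Var j) xs"

fun tnorm :: "'t trm \<Rightarrow> 't trm" where
  "tnorm (Var i) = Var i"
| "tnorm (Op \<sigma> us) = Op \<sigma> (trim_args (map tnorm us))"

fun tsubst :: "'t trm list \<Rightarrow> 't trm \<Rightarrow> 't trm" where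
  "tsubst ts (Var i) = (if i < length ts then ts ! i else Var i)"
| "tsubst ts (Op \<sigma> us) =
     Op \<sigma> (map (tsubst ts) us @ map (\<lambda>j. ts ! j) [length us..<length ts])"

definition term_clone :: "('t trm, 't) clone_alg" where
  "term_clone = \<lparr> ccarrier = {t. tnorm t = t},
                  cq = (\<lambda>t ts. tnorm (tsubst ts t)),
                  ce = Var,
                  cop = (\<lambda>\<sigma>. Op \<sigma> []) \<rparr>"

record ('a, 't) talg =
  tcarrier :: "'a set"
  ttrace :: "(nat \<Rightarrow> 'a) set"
  top :: "'t \<Rightarrow> (nat \<Rightarrow> 'a) \<Rightarrow> 'a"

definition thread_eq :: "(nat \<Rightarrow> 'a) \<Rightarrow> (nat \<Rightarrow> 'a) \<Rightarrow> bool" where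
  "thread_eq r s \<longleftrightarrow> finite {i. r i \<noteq> s i}"

definition thread_upd :: "(nat \<Rightarrow> 'a) \<Rightarrow> 'a list \<Rightarrow> nat \<Rightarrow> 'a" where
  "thread_upd r as = (\<lambda>i. if i < length as then as ! i else r i)"

definition is_trace :: "'a set \<Rightarrow> (nat \<Rightarrow> 'a) set \<Rightarrow> bool" where
  "is_trace A T \<longleftrightarrow> T \<noteq> {} \<and> T \<subseteq> (UNIV \<rightarrow> A) \<and>
     (\<forall>r \<in> T. \<forall>s \<in> UNIV \<rightarrow> A. thread_eq r s \<longrightarrow> s \<in> T)"

definition t_algebra :: "('a, 't, 'z) talg_scheme \<Rightarrow> bool" where
  "t_algebra A \<longleftrightarrow> is_trace (tcarrier A) (ttrace A) \<and>
     (\<forall>\<sigma>. \<forall>s \<in> ttrace A. top A \<sigma> s \<in> tcarrier A)"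

definition full_fclone :: "('a, 't, 'z) talg_scheme \<Rightarrow> ((nat \<Rightarrow> 'a) \<Rightarrow> 'a, 't) clone_alg" where
  "full_fclone A =
     \<lparr> ccarrier = ttrace A \<rightarrow>\<^sub>E tcarrier A,
       cq = (\<lambda>\<phi> \<psi>s. \<lambda>s \<in> ttrace A. \<phi> (thread_upd s (map (\<lambda>\<psi>. \<psi> s) \<psi>s))),
       ce = (\<lambda>i. \<lambda>s \<in> ttrace A. s i),
       cop = (\<lambda>\<sigma>. restrict (top A \<sigma>) (ttrace A)) \<rparr>"

definition up :: "('a, 't, 'z) talg_scheme \<Rightarrow> ((nat \<Rightarrow> 'a) \<Rightarrow> 'a, 't) clone_alg" where
  "up A = (full_fclone A) \<lparr> ccarrier := clone_gen (full_fclone A) \<rparr>"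

definition eps_class :: "('c, 't, 'z) clone_alg_scheme \<Rightarrow> (nat \<Rightarrow> 'c) set" where
  "eps_class D = {s \<in> UNIV \<rightarrow> ccarrier D. thread_eq (ce D) s}"

text \<open>phi_c(eps[s_1,...,s_n]) = q_n(c,s_1,...,s_n); well defined by (C4).\<close>
definition phi :: "('c, 't, 'z) clone_alg_scheme \<Rightarrow> 'c \<Rightarrow> (nat \<Rightarrow> 'c) \<Rightarrow> 'c" where
  "phi D c s = cq D c (map s [0..<(LEAST n. \<forall>i\<ge>n. s i = ce D i)])"

definition down :: "('c, 't, 'z) clone_alg_scheme \<Rightarrow> ('c, 't) talg" where
  "down D = \<lparr> tcarrier = ccarrier D, ttrace = eps_class D,
              top = (\<lambda>\<sigma>. phi D (cop D \<sigma>)) \<rparr>"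

end

theory Submission
  imports Defs
begin

text \<open>Every c in a clone \<tau>-algebra D yields the map phi_c on the class of \<epsilon>, and by (C1), (C4)
  and (C5) the assignment c \<mapsto> phi_c is a homomorphism from D into the full functional clone
  \<tau>-algebra of D-down that sends constants to constants; by (C3) it is injective, since
  phi_c(\<epsilon>) = c. Hence it maps the subalgebra of D generated by the constants onto
  (D-down)-up, which settles (1). Parts (2) and (3) reduce to (1): quotients of the minimal
  clone \<tau>-algebra of terms are minimal clone \<tau>-algebras, and so is every term clone
  algebra A-up.\<close>

section \<open>Clone algebras\<close>

lemma clone_algebra_ce: "clone_algebra D \<Longrightarrow> ce D i \<in> ccarrier D"
  by (simp add: clone_algebra_def)

lemma clone_algebra_cop: "clone_algebra D \<Longrightarrow> cop D \<sigma> \<in> ccarrier D"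
  by (simp add: clone_algebra_def)

lemma clone_algebra_cq:
  "clone_algebra D \<Longrightarrow> x \<in> ccarrier D \<Longrightarrow> set ys \<subseteq> ccarrier D \<Longrightarrow> cq D x ys \<in> ccarrier D"
  by (simp add: clone_algebra_def)

lemma clone_algebra_proj:
  "clone_algebra D \<Longrightarrow> set ys \<subseteq> ccarrier D \<Longrightarrow> i < length ys \<Longrightarrow> cq D (ce D i) ys = ys ! i"
  by (simp add: clone_algebra_def)

lemma clone_algebra_proj_beyond:
  "clone_algebra D \<Longrightarrow> set ys \<subseteq> ccarrier D \<Longrightarrow> length ys \<le> j \<Longrightarrow> cq D (ce D j) ys = ce D j"
  by (simp add: clone_algebra_def)

lemma clone_algebra_cq_ce:
  "clone_algebra D \<Longrightarrow> x \<in> ccarrier D \<Longrightarrow> cq D x (map (ce D) [0..<n]) = x"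
  by (simp add: clone_algebra_def)

lemma clone_algebra_cq_pad:
  "clone_algebra D \<Longrightarrow> x \<in> ccarrier D \<Longrightarrow> set ys \<subseteq> ccarrier D \<Longrightarrow> length ys < k \<Longrightarrow>
   cq D x ys = cq D x (ys @ map (ce D) [length ys..<k])"
  unfolding clone_algebra_def by blast

lemma clone_algebra_cq_cq:
  "clone_algebra D \<Longrightarrow> x \<in> ccarrier D \<Longrightarrow> set ys \<subseteq> ccarrier D \<Longrightarrow> set zs \<subseteq> ccarrier D \<Longrightarrow>
   length ys = length zs \<Longrightarrow> cq D (cq D x ys) zs = cq D x (map (\<lambda>y. cq D y zs) ys)"
  unfolding clone_algebra_def by blast

lemma clone_gen_subset_carrier:
  assumes "clone_algebra D"
  shows "clone_gen D \<subseteq> ccarrier D"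
proof
  fix x assume "x \<in> clone_gen D"
  then show "x \<in> ccarrier D"
    by induction (auto intro: assms clone_algebra_ce clone_algebra_cop clone_algebra_cq)
qed

lemma clone_gen_mono_ops:
  assumes "cq D = cq E" "ce D = ce E" "cop D = cop E"
  shows "clone_gen D \<subseteq> clone_gen E"
proof
  fix x assume "x \<in> clone_gen D"
  then show "x \<in> clone_gen E"
    by induction (simp_all add: assms clone_gen.intros)
qed

lemma clone_gen_cong:
  "cq D = cq E \<Longrightarrow> ce D = ce E \<Longrightarrow> cop D = cop E \<Longrightarrow> clone_gen D = clone_gen E"
  by (metis clone_gen_mono_ops subset_antisym)

lemma clone_gen_hom_image:
  assumes hom: "\<And>x ys. x \<in> clone_gen D \<Longrightarrow> set ys \<subseteq> clone_gen D \<Longrightarrow>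
                  f (cq D x ys) = cq E (f x) (map f ys)"
    and ce: "\<And>i. f (ce D i) = ce E i" and cop: "\<And>\<sigma>. f (cop D \<sigma>) = cop E \<sigma>"
  shows "f ` clone_gen D = clone_gen E"
proof
  show "f ` clone_gen D \<subseteq> clone_gen E"
  proof clarify
    fix x assume "x \<in> clone_gen D"
    then show "f x \<in> clone_gen E"
    proof induction
      case (gen_q x ys)
      have "set ys \<subseteq> clone_gen D" using gen_q.hyps(2) by blast
      then show ?case using gen_q.IH by (auto simp: hom[OF gen_q.hyps(1)] intro!: clone_gen.gen_q)
    qed (simp_all add: ce cop clone_gen.intros)
  qed
next
  show "clone_gen E \<subseteq> f ` clone_gen D"
  proof
    fix y assume "y \<in> clone_gen E"
    then show "y \<in> f ` clone_gen D"
    proof induction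
      case (gen_e i)
      show ?case using ce clone_gen.gen_e by (metis image_eqI)
    next
      case (gen_op \<sigma>)
      show ?case using cop clone_gen.gen_op by (metis image_eqI)
    next
      case (gen_q y zs)
      obtain x where x: "x \<in> clone_gen D" "y = f x" using gen_q.IH(1) by blast
      have "zs \<in> lists (f ` clone_gen D)" using gen_q.IH(2) by blast
      then obtain xs where xs: "set xs \<subseteq> clone_gen D" "zs = map f xs"
        unfolding lists_image by blast
      have "cq D x xs \<in> clone_gen D" using x xs by (auto intro: clone_gen.gen_q)
      then show ?case using hom[OF x(1) xs(1)] x xs by (metis image_eqI)
    qed
  qed
qed

lemma clone_algebra_hom_image:
  assumes D: "clone_algebra D" and onto: "f ` ccarrier D = ccarrier E"
    and hom: "\<And>x ys. x \<in> ccarrier D \<Longrightarrow> set ys \<subseteq> ccarrier D \<Longrightarrow>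
                f (cq D x ys) = cq E (f x) (map f ys)"
    and ce: "\<And>i. f (ce D i) = ce E i" and cop: "\<And>\<sigma>. f (cop D \<sigma>) = cop E \<sigma>"
  shows "clone_algebra E"
proof -
  have lift: "\<exists>x. x \<in> ccarrier D \<and> X = f x" if "X \<in> ccarrier E" for X
    using that onto by blast
  have lift_list: "\<exists>xs. set xs \<subseteq> ccarrier D \<and> Xs = map f xs" if "set Xs \<subseteq> ccarrier E" for Xs
  proof -
    have "Xs \<in> lists (f ` ccarrier D)" using that onto by auto
    then show ?thesis unfolding lists_image by blast
  qed
  have ces: "set (map (ce D) js) \<subseteq> ccarrier D" for js
    using clone_algebra_ce[OF D] by auto
  have f_ce: "f \<circ> ce D = ce E"
    by (simp add: comp_def ce)
  show ?thesis unfolding clone_algebra_def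
  proof (intro conjI allI impI)
    fix i show "ce E i \<in> ccarrier E"
      using onto clone_algebra_ce[OF D] unfolding ce[symmetric] by blast
  next
    fix \<sigma> show "cop E \<sigma> \<in> ccarrier E"
      using onto clone_algebra_cop[OF D] unfolding cop[symmetric] by blast
  next
    fix X Ys assume X: "X \<in> ccarrier E" and Ys: "set Ys \<subseteq> ccarrier E"
    obtain x where x: "x \<in> ccarrier D" "X = f x" using lift[OF X] by blast
    obtain xs where xs: "set xs \<subseteq> ccarrier D" "Ys = map f xs" using lift_list[OF Ys] by blast
    have "cq E X Ys = f (cq D x xs)" using hom[OF x(1) xs(1)] x xs by simp
    then show "cq E X Ys \<in> ccarrier E"
      using onto clone_algebra_cq[OF D x(1) xs(1)] by blast
  next
    fix Ys i assume Ys: "set Ys \<subseteq> ccarrier E" and i: "i < length Ys"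
    obtain xs where xs: "set xs \<subseteq> ccarrier D" "Ys = map f xs" using lift_list[OF Ys] by blast
    show "cq E (ce E i) Ys = Ys ! i"
      using hom[OF clone_algebra_ce[OF D] xs(1), of i] clone_algebra_proj[OF D xs(1), of i] xs i
      by (simp add: ce)
  next
    fix Ys j assume Ys: "set Ys \<subseteq> ccarrier E" and j: "length Ys \<le> j"
    obtain xs where xs: "set xs \<subseteq> ccarrier D" "Ys = map f xs" using lift_list[OF Ys] by blast
    show "cq E (ce E j) Ys = ce E j"
      using hom[OF clone_algebra_ce[OF D] xs(1), of j] clone_algebra_proj_beyond[OF D xs(1), of j] xs j
      by (simp add: ce)
  next
    fix X n assume X: "X \<in> ccarrier E"
    obtain x where x: "x \<in> ccarrier D" "X = f x" using lift[OF X] by blast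
    have "cq E X (map (ce E) [0..<n]) = f (cq D x (map (ce D) [0..<n]))"
      by (simp only: x(2) hom[OF x(1) ces] map_map f_ce)
    then show "cq E X (map (ce E) [0..<n]) = X"
      using clone_algebra_cq_ce[OF D x(1)] x by simp
  next
    fix X Ys k assume X: "X \<in> ccarrier E" and Ys: "set Ys \<subseteq> ccarrier E" and k: "length Ys < k"
    obtain x where x: "x \<in> ccarrier D" "X = f x" using lift[OF X] by blast
    obtain xs where xs: "set xs \<subseteq> ccarrier D" "Ys = map f xs" using lift_list[OF Ys] by blast
    have pad: "set (xs @ map (ce D) [length xs..<k]) \<subseteq> ccarrier D" using xs ces[of "[length xs..<k]"] by simp
    have "cq E X Ys = f (cq D x xs)" using hom[OF x(1) xs(1)] x xs by simp
    also have "\<dots> = f (cq D x (xs @ map (ce D) [length xs..<k]))"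
      using clone_algebra_cq_pad[OF D x(1) xs(1)] k xs by simp
    also have "\<dots> = cq E X (Ys @ map (ce E) [length Ys..<k])"
      using x xs hom[OF x(1) pad] by (simp add: f_ce)
    finally show "cq E X Ys = cq E X (Ys @ map (ce E) [length Ys..<k])" .
  next
    fix X Ys Zs assume X: "X \<in> ccarrier E" and Ys: "set Ys \<subseteq> ccarrier E"
      and Zs: "set Zs \<subseteq> ccarrier E" and len: "length Ys = length Zs"
    obtain x where x: "x \<in> ccarrier D" "X = f x" using lift[OF X] by blast
    obtain ys where ys: "set ys \<subseteq> ccarrier D" "Ys = map f ys" using lift_list[OF Ys] by blast
    obtain zs where zs: "set zs \<subseteq> ccarrier D" "Zs = map f zs" using lift_list[OF Zs] by blast
    have ys': "set (map (\<lambda>y. cq D y zs) ys) \<subseteq> ccarrier D"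
      using ys zs clone_algebra_cq[OF D] by auto
    have "cq E (cq E X Ys) Zs = f (cq D (cq D x ys) zs)"
      using x ys zs hom[OF x(1) ys(1)] hom[OF clone_algebra_cq[OF D x(1) ys(1)] zs(1)] by simp
    also have "\<dots> = f (cq D x (map (\<lambda>y. cq D y zs) ys))"
      using clone_algebra_cq_cq[OF D x(1) ys(1) zs(1)] len ys zs by simp
    also have "\<dots> = cq E X (map (\<lambda>y. f (cq D y zs)) ys)"
      using x hom[OF x(1) ys'] by (simp add: comp_def)
    also have "map (\<lambda>y. f (cq D y zs)) ys = map (\<lambda>Y. cq E Y Zs) Ys"
      using ys zs hom[OF _ zs(1)] by auto
    finally show "cq E (cq E X Ys) Zs = cq E X (map (\<lambda>Y. cq E Y Zs) Ys)" .
  qed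
qed

lemma clone_iso_inv_into:
  assumes D: "clone_algebra D" and iso: "clone_iso D E f"
  shows "clone_iso E D (inv_into (ccarrier D) f)"
proof -
  let ?g = "inv_into (ccarrier D) f"
  have bij: "bij_betw f (ccarrier D) (ccarrier E)" using iso by (simp add: clone_iso_def)
  have g_f: "?g (f x) = x" if "x \<in> ccarrier D" for x
    using bij that by (simp add: bij_betw_def)
  have g_into: "?g X \<in> ccarrier D" and f_g: "f (?g X) = X" if "X \<in> ccarrier E" for X
    using bij that by (auto simp: bij_betw_def intro: inv_into_into f_inv_into_f)
  have "?g (cq E X Ys) = cq D (?g X) (map ?g Ys)"
    if X: "X \<in> ccarrier E" and Ys: "set Ys \<subseteq> ccarrier E" for X Ys
  proof -
    have gYs: "set (map ?g Ys) \<subseteq> ccarrier D" using Ys g_into by auto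
    have "f (cq D (?g X) (map ?g Ys)) = cq E X Ys"
      using iso X Ys gYs g_into[OF X] f_g by (auto simp: clone_iso_def map_idI subset_iff)
    then show ?thesis using g_f clone_algebra_cq[OF D g_into[OF X] gYs] by metis
  qed
  moreover have "?g (ce E i) = ce D i" for i
    using iso g_f clone_algebra_ce[OF D] by (metis clone_iso_def)
  moreover have "?g (cop E \<sigma>) = cop D \<sigma>" for \<sigma>
    using iso g_f clone_algebra_cop[OF D] by (metis clone_iso_def)
  ultimately show ?thesis
    using bij_betw_inv_into[OF bij] by (simp add: clone_iso_def)
qed

section \<open>Threads and the maps phi_c\<close>

lemma down_simps [simp]:
  "tcarrier (down D) = ccarrier D" "ttrace (down D) = eps_class D"
  "top (down D) \<sigma> = phi D (cop D \<sigma>)"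
  by (simp_all add: down_def)

lemma full_fclone_simps:
  "ccarrier (full_fclone A) = ttrace A \<rightarrow>\<^sub>E tcarrier A"
  "cq (full_fclone A) F Gs = (\<lambda>s\<in>ttrace A. F (thread_upd s (map (\<lambda>G. G s) Gs)))"
  "ce (full_fclone A) i = (\<lambda>s\<in>ttrace A. s i)"
  "cop (full_fclone A) \<sigma> = restrict (top A \<sigma>) (ttrace A)"
  by (simp_all add: full_fclone_def)

lemma up_simps [simp]:
  "ccarrier (up A) = clone_gen (full_fclone A)" "cq (up A) = cq (full_fclone A)"
  "ce (up A) = ce (full_fclone A)" "cop (up A) = cop (full_fclone A)"
  by (simp_all add: up_def)

lemma thread_upd_map_self: "thread_upd s (map s [0..<n]) = s"
  by (auto simp: thread_upd_def)

lemma thread_upd_append_self: "thread_upd s (vs @ map s [length vs..<k]) = thread_upd s vs"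
  by (auto simp: thread_upd_def nth_append)

lemma thread_upd_thread_upd:
  "length ws = length vs \<Longrightarrow> thread_upd (thread_upd s vs) ws = thread_upd s ws"
  by (auto simp: thread_upd_def)

lemma thread_eq_thread_upd: "thread_eq s (thread_upd s vs)"
proof -
  have "{i. s i \<noteq> thread_upd s vs i} \<subseteq> {..<length vs}"
    by (auto simp: thread_upd_def split: if_splits)
  then show ?thesis unfolding thread_eq_def using finite_subset by blast
qed

lemma thread_eq_trans: "thread_eq r s \<Longrightarrow> thread_eq s t \<Longrightarrow> thread_eq r t"
proof -
  have "{i. r i \<noteq> t i} \<subseteq> {i. r i \<noteq> s i} \<union> {i. s i \<noteq> t i}" by auto
  then show "thread_eq r s \<Longrightarrow> thread_eq s t \<Longrightarrow> thread_eq r t"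
    unfolding thread_eq_def by (meson finite_UnI finite_subset)
qed

lemma thread_upd_in_funcset:
  assumes "s \<in> UNIV \<rightarrow> A" and "set vs \<subseteq> A"
  shows "thread_upd s vs \<in> UNIV \<rightarrow> A"
proof
  fix i show "thread_upd s vs i \<in> A"
    using assms nth_mem[of i vs] by (auto simp: thread_upd_def)
qed

lemma eps_class_eventually_ce:
  assumes "s \<in> eps_class D"
  obtains K where "\<forall>i\<ge>K. s i = ce D i"
proof -
  have "finite {i. ce D i \<noteq> s i}" using assms by (simp add: eps_class_def thread_eq_def)
  then obtain K where "\<forall>i\<in>{i. ce D i \<noteq> s i}. i < K"
    using finite_nat_set_iff_bounded by blast
  then have "\<forall>i\<ge>K. s i = ce D i" by (metis (mono_tags) mem_Collect_eq not_le)
  then show thesis by (rule that)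
qed

lemma eps_class_carrier: "s \<in> eps_class D \<Longrightarrow> s i \<in> ccarrier D"
  by (auto simp: eps_class_def)

lemma ce_in_eps_class: "clone_algebra D \<Longrightarrow> ce D \<in> eps_class D"
  by (auto simp: eps_class_def thread_eq_def clone_algebra_ce)

lemma thread_upd_in_eps_class:
  assumes s: "s \<in> eps_class D" and vs: "set vs \<subseteq> ccarrier D"
  shows "thread_upd s vs \<in> eps_class D"
  using s vs thread_eq_trans[OF _ thread_eq_thread_upd] thread_upd_in_funcset
  unfolding eps_class_def by blast

text \<open>By (C4), the LEAST in the definition of phi may be replaced by any bound beyond
  which the thread agrees with the constants.\<close>
lemma phi_eq_cq:
  assumes D: "clone_algebra D" and c: "c \<in> ccarrier D" and s: "s \<in> eps_class D"
    and K: "\<forall>i\<ge>K. s i = ce D i"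
  shows "phi D c s = cq D c (map s [0..<K])"
proof -
  define n where "n = (LEAST n. \<forall>i\<ge>n. s i = ce D i)"
  have tail: "\<forall>i\<ge>n. s i = ce D i" unfolding n_def using K by (rule LeastI)
  have "n \<le> K" unfolding n_def using K by (rule Least_le)
  then consider "n = K" | "n < K" by linarith
  then show ?thesis
  proof cases
    case 2
    have "cq D c (map s [0..<n]) = cq D c (map s [0..<n] @ map (ce D) [n..<K])"
      using clone_algebra_cq_pad[OF D c, of "map s [0..<n]" K] eps_class_carrier[OF s] 2
      by (simp add: image_subset_iff)
    also have "map (ce D) [n..<K] = map s [n..<K]"
      using tail by simp
    also have "map s [0..<n] @ map s [n..<K] = map s [0..<K]"
      using upt_add_eq_append[of 0 n "K - n"] 2 by simp
    finally show ?thesis by (simp add: phi_def n_def[symmetric])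
  qed (simp add: phi_def n_def)
qed

lemma phi_ce_thread: "clone_algebra D \<Longrightarrow> c \<in> ccarrier D \<Longrightarrow> phi D c (ce D) = c"
  unfolding phi_def by (rule clone_algebra_cq_ce)

lemma phi_in_carrier:
  "clone_algebra D \<Longrightarrow> c \<in> ccarrier D \<Longrightarrow> s \<in> eps_class D \<Longrightarrow> phi D c s \<in> ccarrier D"
  unfolding phi_def using eps_class_carrier by (auto intro!: clone_algebra_cq)

lemma phi_ce:
  assumes D: "clone_algebra D" and s: "s \<in> eps_class D"
  shows "phi D (ce D i) s = s i"
proof -
  obtain K where K: "\<forall>i\<ge>K. s i = ce D i" using eps_class_eventually_ce[OF s] by blast
  then have K': "\<forall>j\<ge>max K (Suc i). s j = ce D j" by simp
  have "phi D (ce D i) s = cq D (ce D i) (map s [0..<max K (Suc i)])"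
    by (rule phi_eq_cq[OF D clone_algebra_ce[OF D] s K'])
  also have "\<dots> = s i"
    using clone_algebra_proj[OF D, of "map s [0..<max K (Suc i)]" i] eps_class_carrier[OF s]
    by (simp add: image_subset_iff)
  finally show ?thesis .
qed

lemma phi_thread_upd:
  assumes D: "clone_algebra D" and c: "c \<in> ccarrier D" and ds: "set ds \<subseteq> ccarrier D"
    and s: "s \<in> eps_class D"
  shows "phi D c (thread_upd s (map (\<lambda>d. phi D d s) ds)) = phi D (cq D c ds) s"
proof -
  obtain K0 where K0: "\<forall>i\<ge>K0. s i = ce D i" using eps_class_eventually_ce[OF s] by blast
  define K where "K = Suc (max K0 (length ds))"
  have K: "\<forall>i\<ge>K. s i = ce D i" and len: "length ds < K"
    using K0 by (simp_all add: K_def)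
  define zs where "zs = map s [0..<K]"
  have zs: "set zs \<subseteq> ccarrier D" and len_zs: "length zs = K"
    using eps_class_carrier[OF s] by (auto simp: zs_def)
  define ds' where "ds' = ds @ map (ce D) [length ds..<K]"
  have ds': "set ds' \<subseteq> ccarrier D" and len_ds': "length ds' = K"
    using ds clone_algebra_ce[OF D] len by (auto simp: ds'_def)
  define t where "t = thread_upd s (map (\<lambda>d. phi D d s) ds)"
  have t: "t \<in> eps_class D"
    unfolding t_def using ds phi_in_carrier[OF D _ s]
    by (intro thread_upd_in_eps_class[OF s]) auto
  have t_tail: "\<forall>i\<ge>K. t i = ce D i" using K len by (simp add: t_def thread_upd_def)
  have t_init: "map t [0..<K] = map (\<lambda>y. cq D y zs) ds'"
  proof (rule nth_equalityI)
    fix i assume "i < length (map t [0..<K])"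
    then have i: "i < K" by simp
    show "map t [0..<K] ! i = map (\<lambda>y. cq D y zs) ds' ! i"
    proof (cases "i < length ds")
      case True
      then have "ds ! i \<in> ccarrier D" using ds nth_mem by blast
      then show ?thesis
        using True i phi_eq_cq[OF D _ s K, of "ds ! i"]
        by (auto simp: t_def thread_upd_def ds'_def nth_append zs_def)
    next
      case False
      then show ?thesis
        using i clone_algebra_proj[OF D zs, of i] len_zs
        by (simp add: t_def thread_upd_def ds'_def nth_append zs_def)
    qed
  qed (simp add: len_ds')
  have "phi D c t = cq D c (map (\<lambda>y. cq D y zs) ds')"
    using phi_eq_cq[OF D c t t_tail] t_init by simp
  also have "\<dots> = cq D (cq D c ds') zs"
    using clone_algebra_cq_cq[OF D c ds' zs] len_ds' len_zs by simp
  also have "cq D c ds' = cq D c ds"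
    unfolding ds'_def using clone_algebra_cq_pad[OF D c ds len] by simp
  also have "cq D (cq D c ds) zs = phi D (cq D c ds) s"
    unfolding zs_def using phi_eq_cq[OF D clone_algebra_cq[OF D c ds] s K] by simp
  finally show ?thesis unfolding t_def .
qed

lemma cq_restrict_phi:
  assumes D: "clone_algebra D" and c: "c \<in> ccarrier D" and ds: "set ds \<subseteq> ccarrier D"
  shows "cq (full_fclone (down D)) (restrict (phi D c) (eps_class D))
           (map (\<lambda>d. restrict (phi D d) (eps_class D)) ds)
         = restrict (phi D (cq D c ds)) (eps_class D)"
  unfolding full_fclone_simps down_simps
proof (rule restrict_ext)
  fix s assume s: "s \<in> eps_class D"
  have t: "thread_upd s (map (\<lambda>d. phi D d s) ds) \<in> eps_class D"
    using ds phi_in_carrier[OF D _ s] by (intro thread_upd_in_eps_class[OF s]) auto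
  have m: "map (\<lambda>G. G s) (map (\<lambda>d. restrict (phi D d) (eps_class D)) ds) = map (\<lambda>d. phi D d s) ds"
    using s by simp
  show "restrict (phi D c) (eps_class D)
      (thread_upd s (map (\<lambda>G. G s) (map (\<lambda>d. restrict (phi D d) (eps_class D)) ds)))
    = phi D (cq D c ds) s"
    by (simp only: m restrict_apply'[OF t] phi_thread_upd[OF D c ds s])
qed

lemma clone_iso_up_down:
  assumes D: "clone_algebra D" and M: "minimal_clone D"
  shows "clone_iso D (up (down D)) (\<lambda>c. restrict (phi D c) (eps_class D))"
proof -
  let ?f = "\<lambda>c. restrict (phi D c) (eps_class D)"
  have hom: "?f (cq D x ys) = cq (full_fclone (down D)) (?f x) (map ?f ys)"
    if "x \<in> ccarrier D" "set ys \<subseteq> ccarrier D" for x ys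
    using cq_restrict_phi[OF D that] by simp
  have ce: "?f (ce D i) = ce (full_fclone (down D)) i" for i
    using phi_ce[OF D] unfolding full_fclone_simps down_simps by (auto intro: restrict_ext)
  have cop: "?f (cop D \<sigma>) = cop (full_fclone (down D)) \<sigma>" for \<sigma>
    by (simp add: full_fclone_simps)
  have "?f ` clone_gen D = clone_gen (full_fclone (down D))"
    using hom clone_gen_subset_carrier[OF D] ce cop by (intro clone_gen_hom_image) (meson subsetD order_trans)
  moreover have "inj_on ?f (ccarrier D)"
  proof (rule inj_onI)
    fix x y assume "x \<in> ccarrier D" "y \<in> ccarrier D" and eq: "?f x = ?f y"
    have "phi D x (ce D) = phi D y (ce D)"
      using fun_cong[OF eq, of "ce D"] ce_in_eps_class[OF D] by simp
    then show "x = y"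
      using phi_ce_thread[OF D] \<open>x \<in> ccarrier D\<close> \<open>y \<in> ccarrier D\<close> by simp
  qed
  ultimately show ?thesis
    using M hom ce cop unfolding clone_iso_def bij_betw_def minimal_clone_def by simp
qed

lemma clone_isomorphic_up_down:
  "clone_algebra D \<Longrightarrow> minimal_clone D \<Longrightarrow> clone_isomorphic (up (down D)) D"
  unfolding clone_isomorphic_def by (blast intro: clone_iso_inv_into clone_iso_up_down)

section \<open>Quotients\<close>

lemma some_in_equiv_class:
  assumes "equiv A r" and "a \<in> A"
  shows "((SOME x. x \<in> r``{a}), a) \<in> r"
proof -
  have "(SOME x. x \<in> r``{a}) \<in> r``{a}"
    using equiv_class_self[OF assms] by (rule someI)
  then show ?thesis using assms(1) by (auto elim: equivE sym_on_subset dest: symD)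
qed

lemma cq_clone_quot:
  assumes C: "clone_congruence D \<phi>" and x: "x \<in> ccarrier D" and ys: "set ys \<subseteq> ccarrier D"
  shows "cq (clone_quot D \<phi>) (\<phi>``{x}) (map (\<lambda>y. \<phi>``{y}) ys) = \<phi>``{cq D x ys}"
proof -
  have E: "equiv (ccarrier D) \<phi>" using C by (simp add: clone_congruence_def)
  have "list_all2 (\<lambda>y y'. (y, y') \<in> \<phi>) (map (\<lambda>y. SOME y'. y' \<in> \<phi>``{y}) ys) ys"
    using ys nth_mem some_in_equiv_class[OF E] by (fastforce simp: list_all2_conv_all_nth)
  then have "(cq D (SOME x'. x' \<in> \<phi>``{x}) (map (\<lambda>y. SOME y'. y' \<in> \<phi>``{y}) ys), cq D x ys) \<in> \<phi>"
    using C some_in_equiv_class[OF E x] unfolding clone_congruence_def by blast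
  then show ?thesis by (simp add: clone_quot_def comp_def equiv_class_eq[OF E])
qed

lemma clone_algebra_clone_quot:
  assumes D: "clone_algebra D" and C: "clone_congruence D \<phi>"
  shows "clone_algebra (clone_quot D \<phi>)"
proof (rule clone_algebra_hom_image[OF D, where f = "\<lambda>x. \<phi>``{x}"])
  show "(\<lambda>x. \<phi>``{x}) ` ccarrier D = ccarrier (clone_quot D \<phi>)"
    by (auto simp: clone_quot_def quotient_def)
next
  fix x ys assume "x \<in> ccarrier D" "set ys \<subseteq> ccarrier D"
  then show "\<phi>``{cq D x ys} = cq (clone_quot D \<phi>) (\<phi>``{x}) (map (\<lambda>y. \<phi>``{y}) ys)"
    by (simp add: cq_clone_quot[OF C])
qed (simp_all add: clone_quot_def)

lemma minimal_clone_quot: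
  assumes D: "clone_algebra D" and M: "minimal_clone D" and C: "clone_congruence D \<phi>"
  shows "minimal_clone (clone_quot D \<phi>)"
proof -
  have "(\<lambda>x. \<phi>``{x}) ` clone_gen D = clone_gen (clone_quot D \<phi>)"
  proof (rule clone_gen_hom_image)
    fix x ys assume "x \<in> clone_gen D" "set ys \<subseteq> clone_gen D"
    then show "\<phi>``{cq D x ys} = cq (clone_quot D \<phi>) (\<phi>``{x}) (map (\<lambda>y. \<phi>``{y}) ys)"
      using clone_gen_subset_carrier[OF D] by (simp add: cq_clone_quot[OF C] subset_iff)
  qed (simp_all add: clone_quot_def)
  moreover have "ccarrier (clone_quot D \<phi>) = (\<lambda>x. \<phi>``{x}) ` ccarrier D"
    by (auto simp: clone_quot_def quotient_def)
  ultimately show ?thesis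
    using M unfolding minimal_clone_def by simp
qed

section \<open>Functional clone algebras\<close>

lemma clone_algebra_clone_gen:
  assumes D: "clone_algebra D"
  shows "clone_algebra (D\<lparr>ccarrier := clone_gen D\<rparr>)"
proof -
  have sub: "clone_gen D \<subseteq> ccarrier D" by (rule clone_gen_subset_carrier[OF D])
  have "set ys \<subseteq> clone_gen D \<Longrightarrow> set ys \<subseteq> ccarrier D" for ys using sub by blast
  with sub D show ?thesis
    unfolding clone_algebra_def by (simp add: subset_iff clone_gen.intros)
qed

lemma thread_upd_in_trace:
  assumes A: "t_algebra A" and s: "s \<in> ttrace A" and vs: "set vs \<subseteq> tcarrier A"
  shows "thread_upd s vs \<in> ttrace A"
proof -
  have T: "is_trace (tcarrier A) (ttrace A)" using A by (simp add: t_algebra_def)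
  then have "s \<in> UNIV \<rightarrow> tcarrier A" using s by (auto simp: is_trace_def)
  then have "thread_upd s vs \<in> UNIV \<rightarrow> tcarrier A" using vs by (rule thread_upd_in_funcset)
  then show ?thesis
    using T s thread_eq_thread_upd unfolding is_trace_def by blast
qed

lemma clone_algebra_full_fclone:
  assumes A: "t_algebra A"
  shows "clone_algebra (full_fclone A)"
proof -
  let ?T = "ttrace A" and ?F = "full_fclone A"
  have thread_val: "s i \<in> tcarrier A" if "s \<in> ?T" for s i
    using A that by (auto simp: t_algebra_def is_trace_def)
  have vals: "set (map (\<lambda>G. G s) Gs) \<subseteq> tcarrier A" if "set Gs \<subseteq> ccarrier ?F" "s \<in> ?T" for Gs s
    using that by (auto simp: full_fclone_simps)
  have upd: "thread_upd s (map (\<lambda>G. G s) Gs) \<in> ?T" if "set Gs \<subseteq> ccarrier ?F" "s \<in> ?T" for Gs s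
    by (rule thread_upd_in_trace[OF A that(2) vals[OF that]])
  have ext: "F \<in> extensional ?T" if "F \<in> ccarrier ?F" for F
    using that by (simp add: full_fclone_simps PiE_iff)
  have cq_ext: "cq ?F F Gs \<in> extensional ?T" for F Gs
    by (simp add: full_fclone_simps)
  have ce_ext: "ce ?F i \<in> extensional ?T" for i
    by (simp add: full_fclone_simps)
  have ce_map: "map (\<lambda>G. G s) (map (ce ?F) js) = map s js" if "s \<in> ?T" for s js
    using that by (simp add: full_fclone_simps)
  show ?thesis unfolding clone_algebra_def
  proof (intro conjI allI impI)
    fix i show "ce ?F i \<in> ccarrier ?F"
      using thread_val by (simp add: full_fclone_simps)
  next
    fix \<sigma> show "cop ?F \<sigma> \<in> ccarrier ?F"
      using A by (simp add: full_fclone_simps t_algebra_def)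
  next
    fix F Gs assume "F \<in> ccarrier ?F" "set Gs \<subseteq> ccarrier ?F"
    then show "cq ?F F Gs \<in> ccarrier ?F"
      using upd by (auto simp: full_fclone_simps)
  next
    fix Gs i assume Gs: "set Gs \<subseteq> ccarrier ?F" and i: "i < length Gs"
    have "Gs ! i \<in> ccarrier ?F" using Gs nth_mem[OF i] by blast
    then show "cq ?F (ce ?F i) Gs = Gs ! i"
    proof (rule extensionalityI[OF cq_ext ext])
      fix s assume "s \<in> ?T"
      then show "cq ?F (ce ?F i) Gs s = (Gs ! i) s"
        using upd[OF Gs] i by (simp add: full_fclone_simps thread_upd_def)
    qed
  next
    fix Gs j assume Gs: "set Gs \<subseteq> ccarrier ?F" and j: "length Gs \<le> j"
    show "cq ?F (ce ?F j) Gs = ce ?F j"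
    proof (rule extensionalityI[OF cq_ext ce_ext])
      fix s assume "s \<in> ?T"
      then show "cq ?F (ce ?F j) Gs s = ce ?F j s"
        using upd[OF Gs] j by (simp add: full_fclone_simps thread_upd_def)
    qed
  next
    fix F n assume F: "F \<in> ccarrier ?F"
    show "cq ?F F (map (ce ?F) [0..<n]) = F"
    proof (rule extensionalityI[OF cq_ext ext[OF F]])
      fix s assume "s \<in> ?T"
      then show "cq ?F F (map (ce ?F) [0..<n]) s = F s"
        using ce_map by (simp add: full_fclone_simps thread_upd_map_self del: map_map)
    qed
  next
    fix F Gs k
    show "cq ?F F Gs = cq ?F F (Gs @ map (ce ?F) [length Gs..<k])"
    proof (rule extensionalityI[OF cq_ext cq_ext])
      fix s assume s: "s \<in> ?T"
      have "thread_upd s (map (\<lambda>G. G s) (Gs @ map (ce ?F) [length Gs..<k]))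
            = thread_upd s (map (\<lambda>G. G s) Gs)"
        using ce_map[OF s] thread_upd_append_self[of s "map (\<lambda>G. G s) Gs" k] by (simp del: map_map)
      then show "cq ?F F Gs s = cq ?F F (Gs @ map (ce ?F) [length Gs..<k]) s"
        using s by (simp add: full_fclone_simps)
    qed
  next
    fix F Gs Hs assume F: "F \<in> ccarrier ?F" and Gs: "set Gs \<subseteq> ccarrier ?F"
      and Hs: "set Hs \<subseteq> ccarrier ?F" and len: "length Gs = length Hs"
    show "cq ?F (cq ?F F Gs) Hs = cq ?F F (map (\<lambda>G. cq ?F G Hs) Gs)"
    proof (rule extensionalityI[OF cq_ext cq_ext])
      fix s assume s: "s \<in> ?T"
      define t where "t = thread_upd s (map (\<lambda>H. H s) Hs)"
      have t: "t \<in> ?T" unfolding t_def by (rule upd[OF Hs s])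
      have "cq ?F (cq ?F F Gs) Hs s = F (thread_upd t (map (\<lambda>G. G t) Gs))"
        using s t by (simp add: full_fclone_simps t_def)
      also have "thread_upd t (map (\<lambda>G. G t) Gs) = thread_upd s (map (\<lambda>G. G t) Gs)"
        unfolding t_def by (rule thread_upd_thread_upd) (simp add: len)
      also have "map (\<lambda>G. G t) Gs = map (\<lambda>G. cq ?F G Hs s) Gs"
        using s by (simp add: full_fclone_simps t_def)
      also have "F (thread_upd s \<dots>) = cq ?F F (map (\<lambda>G. cq ?F G Hs) Gs) s"
        using s by (simp add: full_fclone_simps comp_def)
      finally show "cq ?F (cq ?F F Gs) Hs s = cq ?F F (map (\<lambda>G. cq ?F G Hs) Gs) s" .
    qed
  qed
qed

lemma clone_algebra_up: "t_algebra A \<Longrightarrow> clone_algebra (up A)"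
  unfolding up_def by (intro clone_algebra_clone_gen clone_algebra_full_fclone)

lemma minimal_clone_up: "minimal_clone (up A)"
  using clone_gen_cong[of "up A" "full_fclone A"] by (simp add: minimal_clone_def)

section \<open>The clone algebra of terms\<close>

text \<open>Op \<sigma> us denotes \<sigma>(us, e_{n+1}, e_{n+2}, ...), so its j-th argument is
  arg_or_var us j; trim_args xs depends only on arg_or_var xs.\<close>
definition arg_or_var :: "'t trm list \<Rightarrow> nat \<Rightarrow> 't trm" where
  "arg_or_var xs j = (if j < length xs then xs ! j else Var j)"

lemma trim_args_eq_map_arg_or_var:
  "trim_args xs = map (arg_or_var xs) [0..<(LEAST k. \<forall>j\<ge>k. arg_or_var xs j = Var j)]"
proof -
  let ?P = "\<lambda>k. \<forall>j. k \<le> j \<and> j < length xs \<longrightarrow> xs ! j = Var j"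
  let ?Q = "\<lambda>k. \<forall>j\<ge>k. arg_or_var xs j = Var j"
  define n where "n = (LEAST k. ?Q k)"
  have Ql: "?Q (length xs)" by (simp add: arg_or_var_def)
  have Qn: "?Q n" unfolding n_def using Ql by (rule LeastI)
  have nl: "n \<le> length xs" unfolding n_def using Ql by (rule Least_le)
  have Pn: "?P n" using Qn by (auto simp: arg_or_var_def)
  define p where "p = (LEAST k. ?P k)"
  have pn: "p \<le> n" unfolding p_def using Pn by (rule Least_le)
  have Pp: "?P p" unfolding p_def using Pn by (rule LeastI)
  have Qp: "?Q p" using Pp by (auto simp: arg_or_var_def)
  have np: "n \<le> p" unfolding n_def using Qp by (rule Least_le)
  have "trim_args xs = take p xs" by (simp add: trim_args_def p_def)
  also have "p = n" using pn np by simp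
  also have "take n xs = map (arg_or_var xs) [0..<n]"
    by (rule nth_equalityI) (use nl in \<open>auto simp: arg_or_var_def\<close>)
  finally show ?thesis by (simp add: n_def)
qed

lemma trim_args_cong: "arg_or_var xs = arg_or_var ys \<Longrightarrow> trim_args xs = trim_args ys"
  by (simp add: trim_args_eq_map_arg_or_var)

lemma arg_or_var_trim_args: "arg_or_var (trim_args xs) j = arg_or_var xs j"
proof -
  define n where "n = (LEAST k. \<forall>j\<ge>k. arg_or_var xs j = Var j)"
  have Qn: "\<forall>j\<ge>n. arg_or_var xs j = Var j" unfolding n_def
    by (rule LeastI[of _ "length xs"]) (simp add: arg_or_var_def)
  have "trim_args xs = map (arg_or_var xs) [0..<n]" unfolding n_def by (rule trim_args_eq_map_arg_or_var)
  then show ?thesis using Qn by (cases "j < n") (auto simp: arg_or_var_def)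
qed

lemma arg_or_var_map_tnorm: "arg_or_var (map tnorm xs) j = tnorm (arg_or_var xs j)"
  by (simp add: arg_or_var_def)

lemma arg_or_var_trim_args_map_tnorm:
  "arg_or_var (trim_args (map tnorm xs)) j = tnorm (arg_or_var xs j)"
  by (simp only: arg_or_var_trim_args arg_or_var_map_tnorm)

lemma pred_arg_or_var: "(\<And>x. x \<in> set xs \<Longrightarrow> P x) \<Longrightarrow> (\<And>i. P (Var i)) \<Longrightarrow> P (arg_or_var xs j)"
  by (simp add: arg_or_var_def)

lemma tnorm_Op_cong:
  assumes "\<And>j. tnorm (arg_or_var xs j) = tnorm (arg_or_var ys j)"
  shows "tnorm (Op \<sigma> xs) = tnorm (Op \<sigma> ys)"
proof -
  have h: "arg_or_var (map tnorm xs) = arg_or_var (map tnorm ys)"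
    by (rule ext) (simp add: arg_or_var_map_tnorm assms)
  show ?thesis using trim_args_cong[OF h] by simp
qed

lemma arg_or_var_tsubst_args:
  "arg_or_var (map (tsubst ts) us @ map (\<lambda>j. ts ! j) [length us..<length ts]) j
   = tsubst ts (arg_or_var us j)"
  by (auto simp: arg_or_var_def nth_append)

lemma tnorm_idem: "tnorm (tnorm t) = tnorm t"
proof (induction t)
  case (Op \<sigma> us)
  have "tnorm (tnorm (arg_or_var us j)) = tnorm (arg_or_var us j)" for j
    using Op.IH by (rule pred_arg_or_var) simp_all
  then have "tnorm (Op \<sigma> (trim_args (map tnorm us))) = tnorm (Op \<sigma> us)"
    by (intro tnorm_Op_cong) (simp only: arg_or_var_trim_args_map_tnorm)
  then show ?case by simp
qed simp

lemma tnorm_tsubst_cong: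
  assumes "\<And>i. tnorm (tsubst ts' (Var i)) = tnorm (tsubst ts (Var i))"
  shows "tnorm (tsubst ts' t) = tnorm (tsubst ts t)"
proof (induction t)
  case (Op \<sigma> us)
  have "tnorm (tsubst ts' (arg_or_var us j)) = tnorm (tsubst ts (arg_or_var us j))" for j
    using Op.IH assms by (rule pred_arg_or_var)
  then show ?case
    unfolding tsubst.simps(2) by (intro tnorm_Op_cong) (simp only: arg_or_var_tsubst_args)
qed (rule assms)

lemma tnorm_tsubst_tnorm: "tnorm (tsubst zs (tnorm t)) = tnorm (tsubst zs t)"
proof (induction t)
  case (Op \<sigma> us)
  have "tnorm (tsubst zs (tnorm (arg_or_var us j))) = tnorm (tsubst zs (arg_or_var us j))" for j
    using Op.IH by (rule pred_arg_or_var) simp_all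
  then have "tnorm (tsubst zs (Op \<sigma> (trim_args (map tnorm us)))) = tnorm (tsubst zs (Op \<sigma> us))"
    unfolding tsubst.simps(2)
    by (intro tnorm_Op_cong) (simp only: arg_or_var_tsubst_args arg_or_var_trim_args_map_tnorm)
  then show ?case by simp
qed simp

lemma tsubst_tsubst:
  assumes l: "length ys = length zs"
  shows "tsubst zs (tsubst ys x) = tsubst (map (tsubst zs) ys) x"
proof (induction x)
  case (Var i) then show ?case using l by auto
next
  case (Op \<sigma> us)
  have 1: "map (tsubst zs) (map (tsubst ys) us) = map (tsubst (map (tsubst zs) ys)) us"
    unfolding map_map by (rule map_cong[OF refl]) (simp add: Op.IH)
  have 2: "map (tsubst zs) (map (\<lambda>j. ys ! j) [length us..<length ys])
          = map (\<lambda>j. map (tsubst zs) ys ! j) [length us..<length (map (tsubst zs) ys)]"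
    by (rule nth_equalityI) auto
  have 3: "[length (map (tsubst ys) us @ map (\<lambda>j. ys ! j) [length us..<length ys])..<length zs] = []"
    using l by simp
  show ?case by (simp only: tsubst.simps(2) map_append 1 2 3) simp
qed

lemma tsubst_Nil: "tsubst [] x = x"
  by (induction x) (auto intro: map_idI)

lemma clone_algebra_term_clone: "clone_algebra term_clone"
  unfolding clone_algebra_def
proof (intro conjI allI impI)
  fix i show "ce term_clone i \<in> ccarrier term_clone" by (simp add: term_clone_def)
next
  fix \<sigma> :: 'a show "cop term_clone \<sigma> \<in> ccarrier term_clone" by (simp add: term_clone_def trim_args_def)
next
  fix x ys show "cq term_clone x ys \<in> ccarrier term_clone" by (simp add: term_clone_def tnorm_idem)
next
  fix ys :: "'a trm list" and i assume "set ys \<subseteq> ccarrier term_clone" "i < length ys"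
  then show "cq term_clone (ce term_clone i) ys = ys ! i" using nth_mem by (force simp: term_clone_def)
next
  fix ys :: "'a trm list" and j assume "length ys \<le> j"
  then show "cq term_clone (ce term_clone j) ys = ce term_clone j" by (simp add: term_clone_def)
next
  fix x :: "'a trm" and n assume x: "x \<in> ccarrier term_clone"
  have "tnorm (tsubst (map Var [0..<n]) x) = tnorm (tsubst [] x)"
    by (rule tnorm_tsubst_cong) simp
  then show "cq term_clone x (map (ce term_clone) [0..<n]) = x" using x by (simp add: term_clone_def tsubst_Nil)
next
  fix x :: "'a trm" and ys k
  have "tnorm (tsubst ys x) = tnorm (tsubst (ys @ map Var [length ys..<k]) x)"
    by (rule tnorm_tsubst_cong) (auto simp: nth_append)
  then show "cq term_clone x ys = cq term_clone x (ys @ map (ce term_clone) [length ys..<k])"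
    by (simp add: term_clone_def)
next
  fix x :: "'a trm" and ys zs :: "'a trm list" assume l: "length ys = length zs"
  have "tnorm (tsubst zs (tnorm (tsubst ys x))) = tnorm (tsubst zs (tsubst ys x))" by (rule tnorm_tsubst_tnorm)
  also have "\<dots> = tnorm (tsubst (map (tsubst zs) ys) x)" by (simp only: tsubst_tsubst[OF l])
  also have "\<dots> = tnorm (tsubst (map (\<lambda>y. tnorm (tsubst zs y)) ys) x)"
    by (rule tnorm_tsubst_cong) (simp add: tnorm_idem)
  finally show "cq term_clone (cq term_clone x ys) zs = cq term_clone x (map (\<lambda>y. cq term_clone y zs) ys)"
    by (simp add: term_clone_def)
qed

lemma minimal_term_clone: "minimal_clone term_clone"
proof -
  have "tnorm t = t \<longrightarrow> t \<in> clone_gen term_clone" for t :: "'a trm"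
  proof (induction t)
    case (Var i)
    show ?case using clone_gen.gen_e[of term_clone i] by (simp add: term_clone_def)
  next
    case (Op \<sigma> us)
    show ?case
    proof
      assume n: "tnorm (Op \<sigma> us) = Op \<sigma> us"
      then have tu: "trim_args (map tnorm us) = us" by simp
      then obtain k where "take k (map tnorm us) = us" unfolding trim_args_def by blast
      then have "map tnorm us = us"
        by (metis length_map length_take min.absorb_iff2 take_all_iff order_refl nle_le)
      then have un: "\<And>u. u \<in> set us \<Longrightarrow> tnorm u = u" by (metis map_eq_conv map_ident)
      have g: "\<And>u. u \<in> set us \<Longrightarrow> u \<in> clone_gen term_clone" using Op.IH un by blast
      have "cq term_clone (cop term_clone \<sigma>) us \<in> clone_gen term_clone"
        by (rule clone_gen.gen_q[OF clone_gen.gen_op]) (rule g)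
      moreover have "cq term_clone (cop term_clone \<sigma>) us = Op \<sigma> us"
        by (simp add: term_clone_def map_nth tu)
      ultimately show "Op \<sigma> us \<in> clone_gen term_clone" by simp
    qed
  qed
  moreover have "clone_gen term_clone \<subseteq> ccarrier term_clone" by (rule clone_gen_subset_carrier[OF clone_algebra_term_clone])
  ultimately show ?thesis unfolding minimal_clone_def by (auto simp: term_clone_def)
qed

theorem mainTheorem5:
  fixes D :: "('c, 't) clone_alg" and A :: "('a, 't) talg"
  shows "(clone_algebra D \<and> minimal_clone D \<longrightarrow> clone_isomorphic (up (down D)) D) \<and>
         (\<forall>\<phi>. clone_congruence (term_clone :: ('t trm, 't) clone_alg) \<phi> \<longrightarrow>
              clone_isomorphic (up (down (clone_quot term_clone \<phi>))) (clone_quot term_clone \<phi>)) \<and>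
         (t_algebra A \<longrightarrow> clone_isomorphic (up (down (up A))) (up A))"
proof (intro conjI allI impI)
  assume "clone_algebra D \<and> minimal_clone D"
  then show "clone_isomorphic (up (down D)) D" using clone_isomorphic_up_down by blast
next
  fix \<phi> assume C: "clone_congruence (term_clone :: ('t trm, 't) clone_alg) \<phi>"
  show "clone_isomorphic (up (down (clone_quot term_clone \<phi>))) (clone_quot term_clone \<phi>)"
    using clone_algebra_clone_quot[OF clone_algebra_term_clone C]
      minimal_clone_quot[OF clone_algebra_term_clone minimal_term_clone C]
    by (rule clone_isomorphic_up_down)
next
  assume "t_algebra A"
  then show "clone_isomorphic (up (down (up A))) (up A)"
    by (rule clone_isomorphic_up_down[OF clone_algebra_up minimal_clone_up])
qed

end
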